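(* Any sequential component with interface $(N,I,O)$ is distributed, i.e. the net $N$ is distributed.
   Context: A Petri net $N=(S,T,F,M_0,\ell)$ has disjoint $S,T$, $F:(S\times T)\cup(T\times S)\to\mathbb N$, $M_0\in\mathbb N^S$, labels $\ell$. ${}^\bullet x(y)=F(y,x)$, $x^\bullet(y)=F(x,y)$ (multisets). For a finite nonempty multiset $G$ of transitions, $M[G\rangle M'$ iff ${}^\bullet G\le M$ and $M'=M-{}^\bullet G+G^\bullet$; reachable markings are those obtained from $M_0$ by steps; $t\smile u$ iff $M[\{t\}+\{u\}\rangle$ for some reachable $M$. A component with interface is $(N,I,O)$ with $I,O\subseteq S$, $I\cap O=\emptyset$, and $o^\bullet=\emptyset$ for all $o\in O$. It is sequential iff there is $Q\subseteq S\setminus(I\cup O)$ such that every $t\in T$ satisfies $|{}^\bullet t\restriction Q|=1$ and $|t^\bullet\restriction Q|=1$, and $|M_0\restriction Q|=1$ (sizes counted with multiplicity). $N$ is distributed iff there is a function $D$ on $S\cup T$ with (1) $s\in{}^\bullet t\Rightarrow D(t)=D(s)$ and (2) $t\smile u\Rightarrow D(t)\ne D(u)$. *)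

theory Defs
  imports Main "HOL-Library.Multiset"
begin

text \<open>A Petri net (S,T,F,M0,l) over a common node type 'a (places and transitions
are disjoint subsets of 'a).\<close>

definition petri_net ::
  "'a set \<Rightarrow> 'a set \<Rightarrow> ('a \<Rightarrow> 'a \<Rightarrow> nat) \<Rightarrow> ('a \<Rightarrow> nat) \<Rightarrow> ('a \<Rightarrow> 'l) \<Rightarrow> bool" where
  "petri_net S T F M0 l \<longleftrightarrow>
     S \<inter> T = {} \<and>
     (\<forall>x y. F x y \<noteq> 0 \<longrightarrow> (x \<in> S \<and> y \<in> T) \<or> (x \<in> T \<and> y \<in> S)) \<and>
     (\<forall>s. M0 s \<noteq> 0 \<longrightarrow> s \<in> S)"

definition preset_ms :: "('a \<Rightarrow> 'a \<Rightarrow> nat) \<Rightarrow> 'a multiset \<Rightarrow> 'a \<Rightarrow> nat" where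
  "preset_ms F G = (\<lambda>s. \<Sum>t\<in>set_mset G. count G t * F s t)"

definition postset_ms :: "('a \<Rightarrow> 'a \<Rightarrow> nat) \<Rightarrow> 'a multiset \<Rightarrow> 'a \<Rightarrow> nat" where
  "postset_ms F G = (\<lambda>s. \<Sum>t\<in>set_mset G. count G t * F t s)"

definition fires ::
  "'a set \<Rightarrow> ('a \<Rightarrow> 'a \<Rightarrow> nat) \<Rightarrow> ('a \<Rightarrow> nat) \<Rightarrow> 'a multiset \<Rightarrow> ('a \<Rightarrow> nat) \<Rightarrow> bool" where
  "fires T F M G M' \<longleftrightarrow>
     G \<noteq> {#} \<and> set_mset G \<subseteq> T \<and>
     (\<forall>s. preset_ms F G s \<le> M s) \<and>
     M' = (\<lambda>s. M s - preset_ms F G s + postset_ms F G s)"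

inductive reachable ::
  "'a set \<Rightarrow> ('a \<Rightarrow> 'a \<Rightarrow> nat) \<Rightarrow> ('a \<Rightarrow> nat) \<Rightarrow> ('a \<Rightarrow> nat) \<Rightarrow> bool"
  for T F M0 where
  init: "reachable T F M0 M0"
| step: "reachable T F M0 M \<Longrightarrow> fires T F M G M' \<Longrightarrow> reachable T F M0 M'"

definition concurrent ::
  "'a set \<Rightarrow> ('a \<Rightarrow> 'a \<Rightarrow> nat) \<Rightarrow> ('a \<Rightarrow> nat) \<Rightarrow> 'a \<Rightarrow> 'a \<Rightarrow> bool" where
  "concurrent T F M0 t u \<longleftrightarrow>
     (\<exists>M M'. reachable T F M0 M \<and> fires T F M ({#t#} + {#u#}) M')"

definition component_with_interface ::
  "'a set \<Rightarrow> 'a set \<Rightarrow> ('a \<Rightarrow> 'a \<Rightarrow> nat) \<Rightarrow> ('a \<Rightarrow> nat) \<Rightarrow> ('a \<Rightarrow> 'l)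
    \<Rightarrow> 'a set \<Rightarrow> 'a set \<Rightarrow> bool" where
  "component_with_interface S T F M0 l Inp Out \<longleftrightarrow>
     petri_net S T F M0 l \<and> Inp \<subseteq> S \<and> Out \<subseteq> S \<and> Inp \<inter> Out = {} \<and>
     (\<forall>p\<in>Out. \<forall>y. F p y = 0)"

text \<open>|m restricted to Q| = 1 (size with multiplicity) for m : 'a \<Rightarrow> nat.\<close>
definition size_one_on :: "'a set \<Rightarrow> ('a \<Rightarrow> nat) \<Rightarrow> bool" where
  "size_one_on Q m \<longleftrightarrow> (\<exists>q\<in>Q. m q = 1 \<and> (\<forall>q'\<in>Q. q' \<noteq> q \<longrightarrow> m q' = 0))"

definition sequential ::
  "'a set \<Rightarrow> 'a set \<Rightarrow> ('a \<Rightarrow> 'a \<Rightarrow> nat) \<Rightarrow> ('a \<Rightarrow> nat) \<Rightarrow> ('a \<Rightarrow> 'l)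
    \<Rightarrow> 'a set \<Rightarrow> 'a set \<Rightarrow> bool" where
  "sequential S T F M0 l Inp Out \<longleftrightarrow>
     component_with_interface S T F M0 l Inp Out \<and>
     (\<exists>Q. Q \<subseteq> S - (Inp \<union> Out) \<and>
          (\<forall>t\<in>T. size_one_on Q (\<lambda>s. F s t) \<and> size_one_on Q (\<lambda>s. F t s)) \<and>
          size_one_on Q M0)"

text \<open>Distributed: some D on S \<union> T (values taken in 'a, which is no loss of
generality since the image of S \<union> T injects into 'a).\<close>
definition distributed ::
  "'a set \<Rightarrow> 'a set \<Rightarrow> ('a \<Rightarrow> 'a \<Rightarrow> nat) \<Rightarrow> ('a \<Rightarrow> nat) \<Rightarrow> ('a \<Rightarrow> 'l) \<Rightarrow> bool" where
  "distributed S T F M0 l \<longleftrightarrow>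
     (\<exists>D :: 'a \<Rightarrow> 'a.
        (\<forall>t\<in>T. \<forall>s\<in>S. F s t \<noteq> 0 \<longrightarrow> D t = D s) \<and>
        (\<forall>t\<in>T. \<forall>u\<in>T. concurrent T F M0 t u \<longrightarrow> D t \<noteq> D u))"

end

theory Submission
  imports Defs
begin

text \<open>In a sequential net the places of Q carry exactly one token in every reachable
marking, since each transition takes one token from Q and puts one back. A step
therefore consumes at most one token from Q, and as every transition needs a token
from Q, every step consists of a single transition. Hence no two transitions are
ever concurrent, and any constant function D witnesses distributedness.\<close>

definition one_in_one_out :: "'a set \<Rightarrow> 'a set \<Rightarrow> ('a \<Rightarrow> 'a \<Rightarrow> nat) \<Rightarrow> bool" where
  "one_in_one_out Q T F \<longleftrightarrow>
     (\<forall>t\<in>T. size_one_on Q (\<lambda>s. F s t) \<and> size_one_on Q (\<lambda>s. F t s))"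

lemma preset_ms_ge:
  assumes "t \<in># G"
  shows "F s t \<le> preset_ms F G s"
proof -
  have "F s t \<le> count G t * F s t"
    using assms by simp
  also have "\<dots> \<le> preset_ms F G s"
    unfolding preset_ms_def by (rule member_le_sum) (use assms in auto)
  finally show ?thesis .
qed

lemma preset_ms_eq_size:
  assumes "\<forall>t\<in>#G. F q t = 1"
  shows "preset_ms F G q = size G"
  using assms by (simp add: preset_ms_def size_multiset_overloaded_eq)

lemma fires_singleton:
  "fires T F M {#t#} M' \<longleftrightarrow> t \<in> T \<and> (\<forall>s. F s t \<le> M s) \<and> M' = (\<lambda>s. M s - F s t + F t s)"
  by (simp add: fires_def preset_ms_def postset_ms_def)

lemma size_one_onE:
  assumes "size_one_on Q m"
  obtains q where "q \<in> Q" "m q = 1" "\<And>q'. q' \<in> Q \<Longrightarrow> q' \<noteq> q \<Longrightarrow> m q' = 0"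
  using assms unfolding size_one_on_def by blast

lemma input_place_eq_marked_place:
  assumes "size_one_on Q (\<lambda>s. F s t)" and "\<forall>s. F s t \<le> M s"
    and "q \<in> Q" and "\<And>q'. q' \<in> Q \<Longrightarrow> q' \<noteq> q \<Longrightarrow> M q' = 0"
  shows "F q t = 1"
proof -
  obtain p where p: "p \<in> Q" "F p t = 1" "\<And>q'. q' \<in> Q \<Longrightarrow> q' \<noteq> p \<Longrightarrow> F q' t = 0"
    using assms(1) by (elim size_one_onE) blast
  have "1 \<le> M p"
    using assms(2) p(2) by metis
  then have "p = q"
    using assms(4) p(1) by fastforce
  with p(2) show ?thesis by simp
qed

lemma fires_singleton_if_size_one_on:
  assumes "one_in_one_out Q T F" and "size_one_on Q M" and "fires T F M G M'"
  obtains t where "G = {#t#}"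
proof -
  obtain q where q: "q \<in> Q" "M q = 1" "\<And>q'. q' \<in> Q \<Longrightarrow> q' \<noteq> q \<Longrightarrow> M q' = 0"
    using assms(2) by (elim size_one_onE) blast
  from assms(3) have G: "G \<noteq> {#}" "set_mset G \<subseteq> T" "\<forall>s. preset_ms F G s \<le> M s"
    unfolding fires_def by auto
  have "F q t = 1" if "t \<in># G" for t
  proof -
    have "size_one_on Q (\<lambda>s. F s t)"
      using assms(1) G(2) that unfolding one_in_one_out_def by blast
    moreover have "\<forall>s. F s t \<le> M s"
      using G(3) preset_ms_ge[OF that] order_trans by blast
    ultimately show ?thesis
      using q(1,3) by (rule input_place_eq_marked_place)
  qed
  then have "size G \<le> 1"
    using G(3) q(2) preset_ms_eq_size by metis
  moreover have "size G \<noteq> 0"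
    using G(1) by simp
  ultimately have "size G = 1"
    by linarith
  then show thesis
    using that size_1_singleton_mset by blast
qed

lemma reachable_size_one_on:
  assumes "one_in_one_out Q T F" and "size_one_on Q M0" and "reachable T F M0 M"
  shows "size_one_on Q M"
  using assms(3)
proof induction
  case init
  show ?case using assms(2) .
next
  case (step M G M')
  obtain t where G: "G = {#t#}"
    using assms(1) step.IH step.hyps(2) by (rule fires_singleton_if_size_one_on)
  with step.hyps(2) have t: "t \<in> T" and enabled: "\<forall>s. F s t \<le> M s"
    and M': "M' = (\<lambda>s. M s - F s t + F t s)"
    by (simp_all add: fires_singleton)
  obtain q where q: "q \<in> Q" "M q = 1" "\<And>q'. q' \<in> Q \<Longrightarrow> q' \<noteq> q \<Longrightarrow> M q' = 0"
    using step.IH by (elim size_one_onE) blast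
  have pre_t: "size_one_on Q (\<lambda>s. F s t)" and post_t: "size_one_on Q (\<lambda>s. F t s)"
    using assms(1) t unfolding one_in_one_out_def by blast+
  have "F q t = 1"
    using pre_t enabled q(1,3) by (rule input_place_eq_marked_place)
  then have "\<forall>q'\<in>Q. q' \<noteq> q \<longrightarrow> F q' t = 0"
    using pre_t q(1) unfolding size_one_on_def by (metis zero_neq_one)
  with \<open>F q t = 1\<close> have "\<forall>s\<in>Q. M' s = F t s"
    using q by (metis M' diff_self_eq_0 diff_zero add_0)
  with post_t show ?case
    unfolding size_one_on_def by auto
qed

lemma sequential_not_concurrent:
  assumes "sequential S T F M0 l Inp Out"
  shows "\<not> concurrent T F M0 t u"
proof
  assume "concurrent T F M0 t u"
  then obtain M M' where "reachable T F M0 M" and "fires T F M ({#t#} + {#u#}) M'"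
    unfolding concurrent_def by blast
  moreover obtain Q where "one_in_one_out Q T F" "size_one_on Q M0"
    using assms unfolding sequential_def one_in_one_out_def by blast
  ultimately obtain v where "{#t#} + {#u#} = {#v#}"
    using reachable_size_one_on fires_singleton_if_size_one_on by metis
  then have "size ({#t#} + {#u#}) = size {#v#}"
    by (rule arg_cong)
  then show False
    by simp
qed

theorem lemma4p11:
  fixes S T Inp Out :: "'a set" and F :: "'a \<Rightarrow> 'a \<Rightarrow> nat"
    and M0 :: "'a \<Rightarrow> nat" and l :: "'a \<Rightarrow> 'l"
  assumes "sequential S T F M0 l Inp Out"
  shows "distributed S T F M0 l"
  unfolding distributed_def
  using sequential_not_concurrent[OF assms] by (intro exI[of _ "\<lambda>_. undefined"]) simp

end
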